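(* Let $\tau:\mathcal D\to\mathcal D$ be injective with inverse $\sigma=\tau^{-1}:\tau(\mathcal D)\to\mathcal D$. Then $$\frac{\|S_\sigma\|_{\mathrm{BMO}}^2}{A}\;\le\;\sup_{\mathcal H\subseteq\tau(\mathcal D)}\frac{1}{|\sigma(\mathcal H)^*|}\int_0^1\mu_{\mathcal H}(t)\,dt\;\le\;\|S_\sigma\|_{\mathrm{BMO}}^2,$$ where $A>0$ is a constant depending only on the constants in the atomic decomposition of dyadic $H^1$ (in particular not on $\tau$). (Both sides may be $+\infty$.)
   Context: $\mathcal D$ denotes the collection of dyadic intervals $[(k-1)2^{-n},k2^{-n})$, $n\ge 0$, $1\le k\le 2^n$, in $[0,1)$; $|I|$ is Lebesgue measure. For a collection $\mathcal E$ of dyadic intervals, $\mathcal E^*=\bigcup_{I\in\mathcal E}I$. The Haar function $h_I$ equals $1$ on the left half of $I$, $-1$ on the right half, and $0$ outside $I$. For $\mathcal H\subseteq\tau(\mathcal D)$ define the maximal function $\mu_{\mathcal H}(t)=\sup_{I\in\mathcal H}\frac{|\sigma(I)|}{|I|}\mathbf 1_I(t)$. Dyadic BMO: a formal Haar series $f=\sum_J a_J h_J$ (real $a_J$) belongs to BMO if $\|f\|_{\mathrm{BMO}}^2=\sup_{I\in\mathcal D}\frac1{|I|}\big\|\sum_{J\subseteq I}a_Jh_J\big\|_{L^2}^2<\infty$. $S_\sigma$ is the linear operator with $S_\sigma(h_I)=h_{\sigma(I)}$ for $I\in\tau(\mathcal D)$ and $S_\sigma(h_I)=0$ for $I\in\mathcal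 D\setminus\tau(\mathcal D)$, and $\|S_\sigma\|_{\mathrm{BMO}}$ denotes its operator norm on dyadic BMO. *)

theory Defs
  imports "HOL-Analysis.Analysis"
begin

definition dyadic :: "real set set" where
  "dyadic = {{(real k - 1) / 2 ^ n ..< real k / 2 ^ n} | n k. 1 \<le> k \<and> k \<le> 2 ^ n}"

abbreviation len :: "real set \<Rightarrow> ennreal" where
  "len I \<equiv> emeasure lborel I"

text \<open>Haar function h_I (for documentation; the L2 norm of a formal Haar series is computed
  via orthogonality of the h_J, with squared norm of h_J equal to |J|).\<close>
definition haar :: "real set \<Rightarrow> real \<Rightarrow> real" where
  "haar I t = (if t \<in> I \<and> t < (Inf I + Sup I) / 2 then 1
               else if t \<in> I then -1 else 0)"

text \<open>A formal Haar series is given by its coefficient family a (only values on dyadic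
  intervals matter).  Squared L2 norm of the partial series over J contained in I:\<close>
definition local_l2_sq :: "(real set \<Rightarrow> real) \<Rightarrow> real set \<Rightarrow> ennreal" where
  "local_l2_sq a I = (\<integral>\<^sup>+ J. ennreal ((a J)\<^sup>2) * len J \<partial>count_space {J \<in> dyadic. J \<subseteq> I})"

definition bmo_sq :: "(real set \<Rightarrow> real) \<Rightarrow> ennreal" where
  "bmo_sq a = (SUP I \<in> dyadic. local_l2_sq a I / len I)"

definition sigma_of :: "(real set \<Rightarrow> real set) \<Rightarrow> real set \<Rightarrow> real set" where
  "sigma_of \<tau> = inv_into dyadic \<tau>"

text \<open>S_sigma, the linear extension of h_I to h_{sigma I} (I in tau(D)), h_I \<mapsto> 0 otherwise,
  acting on coefficient families.\<close>
definition S_op :: "(real set \<Rightarrow> real set) \<Rightarrow> (real set \<Rightarrow> real) \<Rightarrow> (real set \<Rightarrow> real)" where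
  "S_op \<tau> a = (\<lambda>J. \<Sum>I \<in> {I \<in> \<tau> ` dyadic. sigma_of \<tau> I = J}. a I)"

definition S_norm_sq :: "(real set \<Rightarrow> real set) \<Rightarrow> ennreal" where
  "S_norm_sq \<tau> = Inf {C. \<forall>a. bmo_sq a < top \<longrightarrow> bmo_sq (S_op \<tau> a) \<le> C * bmo_sq a}"

definition mu :: "(real set \<Rightarrow> real set) \<Rightarrow> real set set \<Rightarrow> real \<Rightarrow> ennreal" where
  "mu \<tau> H t = (SUP I \<in> H. len (sigma_of \<tau> I) / len I * indicator I t)"

definition middle :: "(real set \<Rightarrow> real set) \<Rightarrow> ennreal" where
  "middle \<tau> = (SUP H \<in> {H. H \<subseteq> \<tau> ` dyadic \<and> H \<noteq> {}}.
      (\<integral>\<^sup>+ t. mu \<tau> H t * indicator {0..<1} t \<partial>lborel) / len (\<Union> (sigma_of \<tau> ` H)))"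

end

theory Submission
  imports Defs
begin

text \<open>
  The statement holds with A = 1; in fact the two outer quantities coincide.
  Since dyadic BMO is defined through local square sums, both directions are direct
  (no atomic decomposition of H^1 is needed).
  For a coefficient family a put c(K) = a(K)^2 |K|, and for K in tau(D) put
  w(K) = |sigma K| / |K|.  Reindexing by tau turns the local square sum of S_sigma a over
  the dyadic J \<subseteq> I into the sum of c(K) w(K) over K in tau{J \<subseteq> I}.

  Upper bound: the BMO condition makes c a Carleson packing with constant ||a||^2, and a
  layer-cake induction bounds the sum of c(K) w(K) by ||a||^2 times the integral of the
  finite maximal function max_K w(K) 1_K, which is dominated by mu_H.

  Lower bound: for finite F \<subseteq> tau(D) let E_K be the part of K where K realises that
  maximum (ties broken by inclusion).  The test family a(K)^2 = |E_K|/|K| has BMO norm at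
  most 1, and the square sum of S_sigma a equals the integral of the maximal function.
  Monotone convergence over finite subfamilies passes from finite F to arbitrary H.
\<close>

section \<open>Dyadic intervals\<close>

lemma dyadic_iff:
  "J \<in> dyadic \<longleftrightarrow> (\<exists>n k. 1 \<le> k \<and> k \<le> (2::nat) ^ n \<and> J = {(real k - 1) / 2 ^ n ..< real k / 2 ^ n})"
  unfolding dyadic_def by blast

lemma dyadic_interval_nested:
  fixes n m k l :: nat and t :: real
  assumes "n \<le> m" "1 \<le> k" "1 \<le> l"
    and "t \<in> {(real k - 1) / 2 ^ n ..< real k / 2 ^ n}" "t \<in> {(real l - 1) / 2 ^ m ..< real l / 2 ^ m}"
  shows "{(real l - 1) / 2 ^ m ..< real l / 2 ^ m} \<subseteq> {(real k - 1) / 2 ^ n ..< real k / 2 ^ n}"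
proof -
  define d :: nat where "d = 2 ^ (m - n)"
  have pm: "(2::real) ^ m = 2 ^ n * real d" unfolding d_def
    by (metis assms(1) le_add_diff_inverse of_nat_numeral of_nat_power power_add)
  have pn: "(0::real) < 2 ^ n" by simp
  have dpos: "0 < real d" unfolding d_def by simp
  have "(real k - 1) / 2 ^ n \<le> t" "t < real k / 2 ^ n" using assms(4) by auto
  hence "real k - 1 \<le> t * 2 ^ n" "t * 2 ^ n < real k" using pn
    by (simp_all add: divide_le_eq less_divide_eq)
  hence t_k: "(real k - 1) * real d \<le> t * 2 ^ m" "t * 2 ^ m < real k * real d"
    unfolding pm using dpos by (simp_all add: mult.assoc[symmetric])
  have "(real l - 1) / 2 ^ m \<le> t" "t < real l / 2 ^ m" using assms(5) by auto
  hence t_l: "real l - 1 \<le> t * 2 ^ m" "t * 2 ^ m < real l"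
    by (simp_all add: divide_le_eq less_divide_eq)
  have "real ((k - 1) * d) < real l" using t_k t_l assms(2) by simp
  hence "(k - 1) * d < l" by linarith
  hence left: "real (k - 1) * real d \<le> real l - 1"
    by (metis Suc_leI Suc_pred' assms(3) le_0_eq less_one not_le of_nat_1 of_nat_diff
        of_nat_le_iff of_nat_mult)
  have "real l < real (k * d) + 1" using t_k t_l by simp
  hence "l \<le> k * d" by linarith
  hence right: "real l \<le> real k * real d" by (metis of_nat_le_iff of_nat_mult)
  show ?thesis
  proof
    fix x assume "x \<in> {(real l - 1) / 2 ^ m ..< real l / 2 ^ m}"
    hence x: "real l - 1 \<le> x * 2 ^ m" "x * 2 ^ m < real l"
      by (simp_all add: divide_le_eq less_divide_eq)
    have "(real k - 1) * real d \<le> x * 2 ^ n * real d"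
      using left x assms(2) unfolding pm by (simp add: mult.assoc)
    hence "real k - 1 \<le> x * 2 ^ n" using dpos by simp
    moreover have "x * 2 ^ n * real d < real k * real d" using right x unfolding pm by (simp add: mult.assoc)
    hence "x * 2 ^ n < real k" using dpos by simp
    ultimately show "x \<in> {(real k - 1) / 2 ^ n ..< real k / 2 ^ n}"
      using pn by (simp add: divide_le_eq less_divide_eq)
  qed
qed

lemma dyadic_nested:
  assumes "I \<in> dyadic" "J \<in> dyadic" "I \<inter> J \<noteq> {}"
  shows "I \<subseteq> J \<or> J \<subseteq> I"
proof -
  obtain n k where I: "1 \<le> k" "I = {(real k - 1) / 2 ^ n ..< real k / 2 ^ n}"
    using assms(1) dyadic_iff by auto
  obtain m l where J: "1 \<le> l" "J = {(real l - 1) / 2 ^ m ..< real l / 2 ^ m}"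
    using assms(2) dyadic_iff by auto
  obtain t where "t \<in> I" "t \<in> J" using assms(3) by auto
  then show ?thesis
    using dyadic_interval_nested[of n m k l t] dyadic_interval_nested[of m n l k t] I J
    by (cases "n \<le> m") auto
qed

lemma dyadic_interval_facts:
  assumes "J \<in> dyadic"
  shows "J \<subseteq> {0..<1}" "J \<in> sets lborel" "0 < measure lborel J"
    "len J = ennreal (measure lborel J)" "len J \<noteq> 0" "len J < top"
proof -
  obtain n k where k: "1 \<le> k" "k \<le> (2::nat) ^ n" and J: "J = {(real k - 1) / 2 ^ n ..< real k / 2 ^ n}"
    using assms dyadic_iff by auto
  have pn: "(0::real) < 2 ^ n" by simp
  have kk: "real k \<le> 2 ^ n" using k(2) by (metis of_nat_le_iff of_nat_numeral of_nat_power)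
  have lt: "(real k - 1) / 2 ^ n < real k / 2 ^ n" using pn by (simp add: divide_strict_right_mono)
  have m: "measure lborel J = 1 / 2 ^ n" unfolding J using lt by (simp add: diff_divide_distrib)
  show "J \<subseteq> {0..<1}" unfolding J using k kk pn by (auto simp: divide_le_eq less_divide_eq)
  show "J \<in> sets lborel" unfolding J by simp
  show "0 < measure lborel J" using m by simp
  show "len J = ennreal (measure lborel J)" unfolding J using lt by simp
  thus "len J \<noteq> 0" "len J < top" using m by simp_all
qed

lemmas dyadic_sub_unit = dyadic_interval_facts(1)
lemmas dyadic_measurable = dyadic_interval_facts(2)
lemmas dyadic_measure_pos = dyadic_interval_facts(3)
lemmas dyadic_len = dyadic_interval_facts(4)
lemmas dyadic_len_ne_0 = dyadic_interval_facts(5)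
lemmas dyadic_len_finite = dyadic_interval_facts(6)

lemma countable_dyadic: "countable dyadic"
proof -
  have "dyadic \<subseteq> (\<lambda>(n::nat, k::nat). {(real k - 1) / 2 ^ n ..< real k / 2 ^ n}) ` UNIV"
    unfolding dyadic_def by auto
  thus ?thesis by (rule countable_subset) simp
qed

lemma countable_dyadic_below: "countable {J \<in> dyadic. J \<subseteq> I}"
  using countable_dyadic by (rule countable_subset[rotated]) blast

lemma div_le_iff_ennreal:
  fixes a b c :: ennreal
  assumes "b \<noteq> 0" "b < top"
  shows "a / b \<le> c \<longleftrightarrow> a \<le> c * b"
proof
  assume "a / b \<le> c"
  hence "(a / b) * b \<le> c * b" by (rule mult_right_mono) simp
  moreover have "(a / b) * b = a" using assms by (simp add: ennreal_divide_times)
  ultimately show "a \<le> c * b" by simp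
next
  assume "a \<le> c * b"
  hence "a / b \<le> c * b / b" by (rule divide_right_mono_ennreal)
  thus "a / b \<le> c" using assms by (simp add: mult_divide_eq_ennreal)
qed

lemma div_len_le_iff: "J \<in> dyadic \<Longrightarrow> a / len J \<le> c \<longleftrightarrow> a \<le> c * len J"
  by (intro div_le_iff_ennreal dyadic_len_ne_0 dyadic_len_finite)

lemma nn_integral_count_space_SUP_finite:
  fixes f :: "'a \<Rightarrow> ennreal"
  assumes "countable A"
  shows "integral\<^sup>N (count_space A) f = (SUP G \<in> {G. finite G \<and> G \<subseteq> A}. sum f G)"
proof (rule antisym)
  have indicator_form: "integral\<^sup>N (count_space B) f = (\<integral>\<^sup>+x. f x * indicator B x \<partial>count_space UNIV)"
    for B by (rule nn_integral_count_space_indicator) simp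
  show "(SUP G \<in> {G. finite G \<and> G \<subseteq> A}. sum f G) \<le> integral\<^sup>N (count_space A) f"
  proof (rule SUP_least, clarify)
    fix G assume G: "finite G" "G \<subseteq> A"
    have "sum f G = integral\<^sup>N (count_space G) f" using G by (simp add: nn_integral_count_space_finite)
    also have "\<dots> \<le> integral\<^sup>N (count_space A) f"
      unfolding indicator_form using G by (intro nn_integral_mono) (auto simp: indicator_def)
    finally show "sum f G \<le> integral\<^sup>N (count_space A) f" .
  qed
  show "integral\<^sup>N (count_space A) f \<le> (SUP G \<in> {G. finite G \<and> G \<subseteq> A}. sum f G)"
  proof (cases "A = {}")
    case True thus ?thesis by (simp add: nn_integral_count_space_finite)
  next
    case False
    define g where "g n = from_nat_into A ` {..n}" for n
    have gA: "g n \<subseteq> A" for n unfolding g_def using from_nat_into[OF False] by blast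
    have exhaust: "x \<in> A \<Longrightarrow> \<exists>n. x \<in> g n" for x
      unfolding g_def using range_from_nat_into[OF False assms] by (metis atMost_iff image_eqI le_refl rangeE)
    have inc: "incseq (\<lambda>n x. f x * indicator (g n) x)"
      unfolding g_def by (auto simp: incseq_def le_fun_def indicator_def)
    have "integral\<^sup>N (count_space A) f = (\<integral>\<^sup>+x. (SUP n. f x * indicator (g n) x) \<partial>count_space UNIV)"
      unfolding indicator_form
    proof (rule nn_integral_cong)
      fix x
      show "f x * indicator A x = (SUP n. f x * indicator (g n) x)"
      proof (cases "x \<in> A")
        case True
        then obtain n where "x \<in> g n" using exhaust by blast
        hence "f x \<le> (SUP n. f x * indicator (g n) x)" by (intro SUP_upper2[of n]) auto
        moreover have "(SUP n. f x * indicator (g n) x) \<le> f x" by (intro SUP_least) (auto simp: indicator_def)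
        ultimately show ?thesis using True by auto
      next
        case False
        hence "x \<notin> g n" for n using gA by blast
        thus ?thesis using False by simp
      qed
    qed
    also have "\<dots> = (SUP n. integral\<^sup>N (count_space (g n)) f)"
      unfolding indicator_form by (rule nn_integral_monotone_convergence_SUP[OF inc]) simp
    also have "\<dots> = (SUP n. sum f (g n))" by (simp add: g_def nn_integral_count_space_finite)
    also have "\<dots> \<le> (SUP G \<in> {G. finite G \<and> G \<subseteq> A}. sum f G)"
      using gA by (intro SUP_mono) (auto simp: g_def)
    finally show ?thesis .
  qed
qed

section \<open>The Carleson packing property of dyadic BMO\<close>

lemma local_l2_sq_le_bmo: "L \<in> dyadic \<Longrightarrow> local_l2_sq a L \<le> bmo_sq a * len L"
  unfolding bmo_sq_def by (subst div_len_le_iff[symmetric]) (auto intro: SUP_upper)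

text \<open>The coefficients c(J) = a(J)^2 |J| pack with constant ||a||^2 on every finite family of dyadic
  intervals: split the family under its maximal members, which are pairwise disjoint.\<close>
lemma bmo_packing:
  assumes "finite E" "E \<subseteq> dyadic"
  shows "(\<Sum>J\<in>E. ennreal ((a J)\<^sup>2) * len J) \<le> bmo_sq a * len (\<Union>E)"
proof -
  define M where "M = {L\<in>E. \<forall>L'\<in>E. L \<subseteq> L' \<longrightarrow> L' = L}"
  define P where "P L = {J\<in>E. J \<subseteq> L}" for L
  define f where "f J = ennreal ((a J)\<^sup>2) * len J" for J
  have ME: "M \<subseteq> E" unfolding M_def by auto
  have fM: "finite M" using ME assms(1) finite_subset by blast
  have cover: "\<exists>L\<in>M. J \<subseteq> L" if J: "J \<in> E" for J
  proof -
    obtain L where "L \<in> E" "J \<subseteq> L" "\<forall>L'\<in>E. L \<subseteq> L' \<longrightarrow> L = L'"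
      using finite_has_maximal2[OF assms(1) J] by blast
    thus ?thesis unfolding M_def by auto
  qed
  have M_disj: "L \<inter> L' = {}" if "L \<in> M" "L' \<in> M" "L \<noteq> L'" for L L'
  proof (rule ccontr)
    assume "L \<inter> L' \<noteq> {}"
    hence "L \<subseteq> L' \<or> L' \<subseteq> L" using dyadic_nested that ME assms(2) by blast
    thus False using that unfolding M_def by auto
  qed
  have P_disj: "P L \<inter> P L' = {}" if "L \<in> M" "L' \<in> M" "L \<noteq> L'" for L L'
  proof -
    have "J \<noteq> {}" if "J \<in> E" for J
      using that assms(2) dyadic_measure_pos[of J] by auto
    thus ?thesis using M_disj[OF that] unfolding P_def by blast
  qed
  have "sum f E = sum f (\<Union>L\<in>M. P L)"
    using cover ME by (intro arg_cong[where f = "sum f"]) (auto simp: P_def)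
  also have "\<dots> = (\<Sum>L\<in>M. sum f (P L))"
    using fM assms(1) P_disj by (intro sum.UNION_disjoint) (auto simp: P_def)
  also have "\<dots> \<le> (\<Sum>L\<in>M. bmo_sq a * len L)"
  proof (rule sum_mono)
    fix L assume L: "L \<in> M"
    have Ld: "L \<in> dyadic" using L ME assms(2) by auto
    have "sum f (P L) \<le> local_l2_sq a L"
      unfolding local_l2_sq_def f_def nn_integral_count_space_SUP_finite[OF countable_dyadic_below]
      using assms by (intro SUP_upper) (auto simp: P_def)
    also have "\<dots> \<le> bmo_sq a * len L" using Ld by (rule local_l2_sq_le_bmo)
    finally show "sum f (P L) \<le> bmo_sq a * len L" .
  qed
  also have "\<dots> = bmo_sq a * len (\<Union>L\<in>M. L)"
    unfolding sum_distrib_left[symmetric]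
  proof (rule arg_cong[where f = "(*) (bmo_sq a)"], rule sum_emeasure)
    show "(\<lambda>L. L) ` M \<subseteq> sets lborel" using ME assms(2) dyadic_measurable by blast
    show "disjoint_family_on (\<lambda>L. L) M" using M_disj unfolding disjoint_family_on_def by blast
  qed (rule fM)
  also have "(\<Union>L\<in>M. L) = \<Union>E" using cover ME by blast
  finally show ?thesis unfolding f_def .
qed

section \<open>The maximal function of a finite weighted family\<close>

definition fmax :: "'a set set \<Rightarrow> ('a set \<Rightarrow> real) \<Rightarrow> 'a \<Rightarrow> real" where
  "fmax F w t = Max (insert 0 ((\<lambda>K. w K * indicator K t) ` F))"

lemma fmax_nonneg: "finite F \<Longrightarrow> 0 \<le> fmax F w t"
  unfolding fmax_def by (rule Max_ge) auto

lemma fmax_ge: "finite F \<Longrightarrow> K \<in> F \<Longrightarrow> w K * indicator K t \<le> fmax F w t"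
  unfolding fmax_def by (rule Max_ge) auto

lemma fmax_le:
  "finite F \<Longrightarrow> 0 \<le> x \<Longrightarrow> (\<And>K. K \<in> F \<Longrightarrow> w K * indicator K t \<le> x) \<Longrightarrow> fmax F w t \<le> x"
  unfolding fmax_def by (subst Max_le_iff) auto

lemma fmax_attained: "finite F \<Longrightarrow> fmax F w t = 0 \<or> (\<exists>K\<in>F. fmax F w t = w K * indicator K t)"
proof -
  assume "finite F"
  hence "fmax F w t \<in> insert 0 ((\<lambda>K. w K * indicator K t) ` F)"
    unfolding fmax_def by (intro Max_in) auto
  thus ?thesis by auto
qed

lemma fmax_outside: "finite F \<Longrightarrow> t \<notin> \<Union>F \<Longrightarrow> fmax F w t = 0"
  by (rule antisym[OF fmax_le fmax_nonneg]) auto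

lemma fmax_mono: "finite F' \<Longrightarrow> F \<subseteq> F' \<Longrightarrow> fmax F w t \<le> fmax F' w t"
  by (rule fmax_le) (auto intro: finite_subset fmax_nonneg fmax_ge)

lemma fmax_measurable:
  assumes "finite F" "F \<subseteq> sets M"
  shows "fmax F w \<in> borel_measurable M"
proof (cases "F = {}")
  case True
  hence "fmax F w = (\<lambda>t. 0)" by (intro ext) (simp add: fmax_def)
  thus ?thesis by simp
next
  case False
  have eq: "fmax F w = (\<lambda>t. max 0 (Max ((\<lambda>K. w K * indicator K t) ` F)))"
    unfolding fmax_def using assms(1) False by (intro ext) simp
  have "(\<lambda>t. Max ((\<lambda>K. w K * indicator K t) ` F)) \<in> borel_measurable M"
    using assms by (intro borel_measurable_Max) auto
  thus ?thesis unfolding eq by measurable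
qed

lemma fmax_peel:
  assumes F: "finite F" and K0: "K0 \<in> F" and least: "\<And>K. K \<in> F \<Longrightarrow> m \<le> w K"
    and m: "m = w K0" "0 \<le> m"
  shows "fmax F w t = m * indicator (\<Union>F) t + fmax (F - {K0}) (\<lambda>K. max 0 (w K - m)) t"
    (is "_ = _ + fmax ?F' ?w' t")
proof (cases "t \<in> \<Union>F")
  case False
  hence "t \<notin> \<Union>?F'" by blast
  thus ?thesis using False F by (simp add: fmax_outside)
next
  case True
  then obtain K1 where K1: "K1 \<in> F" "t \<in> K1" by blast
  have F': "finite ?F'" using F by simp
  have rest_nonneg: "0 \<le> fmax ?F' ?w' t" by (rule fmax_nonneg[OF F'])
  have upper: "fmax F w t \<le> m + fmax ?F' ?w' t"
  proof (rule fmax_le[OF F])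
    show "0 \<le> m + fmax ?F' ?w' t" using m(2) rest_nonneg by simp
    fix K assume K: "K \<in> F"
    show "w K * indicator K t \<le> m + fmax ?F' ?w' t"
    proof (cases "t \<in> K \<and> K \<noteq> K0")
      case True
      hence "?w' K * indicator K t \<le> fmax ?F' ?w' t" using K by (intro fmax_ge[OF F']) auto
      thus ?thesis using True by simp
    qed (use m rest_nonneg in \<open>auto simp: indicator_def\<close>)
  qed
  have m_le: "m \<le> fmax F w t" using fmax_ge[OF F K1(1), of w t] least[OF K1(1)] K1(2) by simp
  have lower: "fmax ?F' ?w' t \<le> fmax F w t - m"
  proof (rule fmax_le[OF F'])
    show "0 \<le> fmax F w t - m" using m_le by simp
    fix K assume K: "K \<in> ?F'"
    show "?w' K * indicator K t \<le> fmax F w t - m"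
      using fmax_ge[OF F, of K w t] K m_le by (cases "t \<in> K") auto
  qed
  show ?thesis using upper lower True by simp
qed

text \<open>Induction on the size of F, peeling off the least weight.\<close>
lemma packing_embedding:
  fixes c :: "'a set \<Rightarrow> ennreal" and B :: ennreal and w :: "'a set \<Rightarrow> real"
  assumes "finite F" "F \<subseteq> sets M" "\<And>K. 0 \<le> w K"
    and "\<And>E. E \<subseteq> F \<Longrightarrow> sum c E \<le> B * emeasure M (\<Union>E)"
  shows "(\<Sum>K\<in>F. c K * ennreal (w K)) \<le> B * (\<integral>\<^sup>+t. ennreal (fmax F w t) \<partial>M)"
  using assms
proof (induction "card F" arbitrary: F w rule: less_induct)
  case less
  note fin = less.prems(1)
  show ?case
  proof (cases "F = {}")
    case True thus ?thesis by simp
  next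
    case False
    have "Min (w ` F) \<in> w ` F" using fin False by (intro Min_in) auto
    then obtain K0 where K0: "K0 \<in> F" "w K0 = Min (w ` F)" by auto
    have least: "w K0 \<le> w K" if "K \<in> F" for K using K0(2) fin that by simp
    define m where "m = w K0"
    define w' where "w' K = max 0 (w K - m)" for K
    define F' where "F' = F - {K0}"
    have m0: "0 \<le> m" unfolding m_def using less.prems(3) .
    have finF': "finite F'" unfolding F'_def using fin by simp
    have F_sets: "F \<subseteq> sets M" "F' \<subseteq> sets M" using less.prems(2) unfolding F'_def by auto
    have IH: "(\<Sum>K\<in>F'. c K * ennreal (w' K)) \<le> B * (\<integral>\<^sup>+t. ennreal (fmax F' w' t) \<partial>M)"
    proof (rule less.hyps)
      show "card F' < card F" unfolding F'_def by (rule card_Diff1_less[OF fin K0(1)])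
      show "\<And>E. E \<subseteq> F' \<Longrightarrow> sum c E \<le> B * emeasure M (\<Union>E)"
        using less.prems(4) unfolding F'_def by blast
    qed (use finF' F_sets in \<open>auto simp: w'_def\<close>)
    have split_weight: "c K * ennreal (w K) = ennreal m * c K + c K * ennreal (w' K)" if "K \<in> F" for K
    proof -
      have "ennreal (w K) = ennreal m + ennreal (w' K)"
        using least[OF that] m0 unfolding w'_def m_def by (simp add: ennreal_plus[symmetric] del: ennreal_plus)
      thus ?thesis by (simp add: algebra_simps)
    qed
    have "w' K0 = 0" unfolding w'_def m_def by simp
    hence "(\<Sum>K\<in>F. c K * ennreal (w' K)) = (\<Sum>K\<in>F'. c K * ennreal (w' K))"
      unfolding F'_def using sum.remove[OF fin K0(1), of "\<lambda>K. c K * ennreal (w' K)"] by simp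
    hence sum_split: "(\<Sum>K\<in>F. c K * ennreal (w K)) = ennreal m * sum c F + (\<Sum>K\<in>F'. c K * ennreal (w' K))"
      using split_weight by (simp add: sum.distrib sum_distrib_left)
    have union_sets: "\<Union>F \<in> sets M" using F_sets fin by (intro sets.finite_Union) auto
    have "ennreal (fmax F w t) = ennreal m * indicator (\<Union>F) t + ennreal (fmax F' w' t)" for t
      using fmax_peel[of F K0 m w t, OF fin K0(1) _ m_def m0] least fmax_nonneg[OF finF', of w' t] m0
      unfolding F'_def w'_def m_def by (cases "t \<in> \<Union>F") simp_all
    hence "(\<integral>\<^sup>+t. ennreal (fmax F w t) \<partial>M)
        = (\<integral>\<^sup>+t. ennreal m * indicator (\<Union>F) t \<partial>M) + (\<integral>\<^sup>+t. ennreal (fmax F' w' t) \<partial>M)"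
      using union_sets fmax_measurable[OF finF' F_sets(2), of w'] by (simp add: nn_integral_add)
    hence integral_split: "(\<integral>\<^sup>+t. ennreal (fmax F w t) \<partial>M)
        = ennreal m * emeasure M (\<Union>F) + (\<integral>\<^sup>+t. ennreal (fmax F' w' t) \<partial>M)"
      using union_sets by (simp add: nn_integral_cmult_indicator)
    have "ennreal m * sum c F \<le> ennreal m * (B * emeasure M (\<Union>F))"
      using less.prems(4)[of F] by (intro mult_left_mono) auto
    hence "(\<Sum>K\<in>F. c K * ennreal (w K))
        \<le> ennreal m * (B * emeasure M (\<Union>F)) + B * (\<integral>\<^sup>+t. ennreal (fmax F' w' t) \<partial>M)"
      unfolding sum_split using IH by (rule add_mono)
    also have "\<dots> = B * (\<integral>\<^sup>+t. ennreal (fmax F w t) \<partial>M)"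
      unfolding integral_split by (simp add: algebra_simps)
    finally show ?thesis .
  qed
qed

text \<open>The regions are disjoint, and the maximal function is the weighted sum of their indicators.\<close>
definition max_region :: "real set set \<Rightarrow> (real set \<Rightarrow> real) \<Rightarrow> real set \<Rightarrow> real set" where
  "max_region F w K = {t \<in> K. \<forall>K'\<in>F. t \<in> K' \<longrightarrow> w K' < w K \<or> (w K' = w K \<and> K' \<subseteq> K)}"

lemma max_region_subset: "max_region F w K \<subseteq> K"
  unfolding max_region_def by auto

lemma max_region_disjoint:
  assumes "K \<in> F" "K' \<in> F" "K \<noteq> K'"
  shows "max_region F w K \<inter> max_region F w K' = {}"
proof (rule ccontr)
  assume "max_region F w K \<inter> max_region F w K' \<noteq> {}"
  then obtain t where "t \<in> max_region F w K" "t \<in> max_region F w K'" by blast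
  hence "w K' < w K \<or> (w K' = w K \<and> K' \<subseteq> K)" "w K < w K' \<or> (w K = w K' \<and> K \<subseteq> K')"
    using assms unfolding max_region_def by auto
  thus False using assms(3) by auto
qed

lemma max_region_measurable:
  assumes "finite F" "F \<subseteq> sets lborel" "K \<in> sets lborel"
  shows "max_region F w K \<in> sets lborel"
proof -
  have "max_region F w K = K - \<Union>{K'\<in>F. \<not> (w K' < w K \<or> (w K' = w K \<and> K' \<subseteq> K))}"
    unfolding max_region_def by blast
  moreover have "\<Union>{K'\<in>F. \<not> (w K' < w K \<or> (w K' = w K \<and> K' \<subseteq> K))} \<in> sets lborel"
    using assms(1,2) by (intro sets.finite_Union) auto
  ultimately show ?thesis using assms(3) by simp
qed

text \<open>Every point of the union lies in some region: take, among the intervals of largest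
  weight containing the point, the largest one; nestedness makes it dominate the others.\<close>
lemma max_region_cover:
  assumes F: "finite F" "F \<subseteq> dyadic" and t: "t \<in> \<Union>F"
  shows "\<exists>K\<in>F. t \<in> max_region F w K"
proof -
  define S where "S = {K\<in>F. t \<in> K}"
  have fS: "finite S" "S \<noteq> {}" unfolding S_def using F t by auto
  define top_weight where "top_weight = Max (w ` S)"
  define S2 where "S2 = {K\<in>S. w K = top_weight}"
  have "top_weight \<in> w ` S" unfolding top_weight_def using fS by (intro Max_in) auto
  hence S2_ne: "S2 \<noteq> {}" unfolding S2_def by auto
  have S2_fin: "finite S2" unfolding S2_def using fS by simp
  obtain K where K: "K \<in> S2" "\<And>K'. K' \<in> S2 \<Longrightarrow> K \<subseteq> K' \<Longrightarrow> K = K'"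
    using finite_has_maximal[OF S2_fin S2_ne] by blast
  have KF: "K \<in> F" "t \<in> K" "w K = top_weight" using K(1) unfolding S2_def S_def by auto
  have "w K' < w K \<or> (w K' = w K \<and> K' \<subseteq> K)" if K': "K' \<in> F" "t \<in> K'" for K'
  proof (cases "w K' < w K")
    case False
    have "K' \<in> S" unfolding S_def using K' by simp
    hence "w K' \<le> w K" unfolding KF(3) top_weight_def using fS by simp
    hence eq: "w K' = w K" using False by simp
    hence "K' \<in> S2" unfolding S2_def S_def using K' KF(3) by simp
    moreover have "K \<subseteq> K' \<or> K' \<subseteq> K" using dyadic_nested KF K' F(2) by blast
    ultimately show ?thesis using K(2) eq by blast
  qed simp
  thus ?thesis using KF(1,2) unfolding max_region_def by blast
qed

lemma fmax_eq_region_sum: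
  assumes F: "finite F" "F \<subseteq> dyadic" and w_nonneg: "\<And>K. 0 \<le> w K"
  shows "fmax F w t = (\<Sum>K\<in>F. w K * indicator (max_region F w K) t)"
proof (cases "t \<in> \<Union>F")
  case False
  hence "\<And>K. K \<in> F \<Longrightarrow> t \<notin> max_region F w K" using max_region_subset by blast
  thus ?thesis using fmax_outside[OF F(1) False] by simp
next
  case True
  then obtain K where K: "K \<in> F" "t \<in> max_region F w K" using max_region_cover[OF F] by blast
  have others: "t \<notin> max_region F w K'" if "K' \<in> F - {K}" for K'
    using max_region_disjoint[of K F K' w] K that by blast
  have "(\<Sum>K'\<in>F. w K' * indicator (max_region F w K') t) = w K"
    using sum.remove[OF F(1) K(1), of "\<lambda>K'. w K' * indicator (max_region F w K') t"] others K(2)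
    by simp
  moreover have "fmax F w t = w K"
  proof (rule antisym)
    show "fmax F w t \<le> w K"
    proof (rule fmax_le[OF F(1) w_nonneg])
      fix K' assume K': "K' \<in> F"
      show "w K' * indicator K' t \<le> w K"
        using K(2) K' w_nonneg[of K] unfolding max_region_def by (cases "t \<in> K'") auto
    qed
    have "t \<in> K" using K(2) max_region_subset by blast
    thus "w K \<le> fmax F w t" using fmax_ge[OF F(1) K(1), of w t] by simp
  qed
  ultimately show ?thesis by simp
qed

lemma integral_fmax_regions:
  assumes F: "finite F" "F \<subseteq> dyadic" and w_nonneg: "\<And>K. 0 \<le> w K"
  shows "(\<integral>\<^sup>+t. ennreal (fmax F w t) \<partial>lborel) = (\<Sum>K\<in>F. ennreal (w K) * len (max_region F w K))"
proof -
  have regions_sets: "max_region F w K \<in> sets lborel" if "K \<in> F" for K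
    using F that dyadic_measurable by (intro max_region_measurable) auto
  have pointwise: "ennreal (fmax F w t) = (\<Sum>K\<in>F. ennreal (w K) * indicator (max_region F w K) t)" for t
  proof -
    have "ennreal (fmax F w t) = (\<Sum>K\<in>F. ennreal (w K * indicator (max_region F w K) t))"
      unfolding fmax_eq_region_sum[OF F w_nonneg] using w_nonneg by (intro sum_ennreal[symmetric]) simp
    also have "\<dots> = (\<Sum>K\<in>F. ennreal (w K) * indicator (max_region F w K) t)"
      by (intro sum.cong refl) (simp add: indicator_def)
    finally show ?thesis .
  qed
  have "(\<integral>\<^sup>+t. ennreal (fmax F w t) \<partial>lborel)
      = (\<Sum>K\<in>F. \<integral>\<^sup>+t. ennreal (w K) * indicator (max_region F w K) t \<partial>lborel)"
    unfolding pointwise using regions_sets by (intro nn_integral_sum) auto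
  also have "\<dots> = (\<Sum>K\<in>F. ennreal (w K) * len (max_region F w K))"
    using regions_sets by (intro sum.cong refl nn_integral_cmult_indicator) auto
  finally show ?thesis .
qed

lemma sigma_tau: "inj_on \<tau> dyadic \<Longrightarrow> J \<in> dyadic \<Longrightarrow> sigma_of \<tau> (\<tau> J) = J"
  unfolding sigma_of_def by simp

lemma sigma_tau_image: "inj_on \<tau> dyadic \<Longrightarrow> A \<subseteq> dyadic \<Longrightarrow> sigma_of \<tau> ` \<tau> ` A = A"
  using sigma_tau by (force simp: image_image)

lemma tau_sigma: "K \<in> \<tau> ` dyadic \<Longrightarrow> \<tau> (sigma_of \<tau> K) = K"
  unfolding sigma_of_def by (rule f_inv_into_f)

lemma sigma_dyadic: "K \<in> \<tau> ` dyadic \<Longrightarrow> sigma_of \<tau> K \<in> dyadic"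
  unfolding sigma_of_def by (rule inv_into_into)

lemma S_op_eq:
  assumes "inj_on \<tau> dyadic" "J \<in> dyadic"
  shows "S_op \<tau> a J = a (\<tau> J)"
proof -
  have "{I \<in> \<tau> ` dyadic. sigma_of \<tau> I = J} = {\<tau> J}"
    using assms sigma_tau[OF assms(1)] by auto
  thus ?thesis unfolding S_op_def by simp
qed

definition weight :: "(real set \<Rightarrow> real set) \<Rightarrow> real set \<Rightarrow> real" where
  "weight \<tau> K = measure lborel (sigma_of \<tau> K) / measure lborel K"

lemma weight_nonneg: "0 \<le> weight \<tau> K"
  unfolding weight_def by simp

lemma weight_ennreal:
  assumes "K \<in> \<tau> ` dyadic" "\<tau> ` dyadic \<subseteq> dyadic"
  shows "ennreal (weight \<tau> K) = len (sigma_of \<tau> K) / len K"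
proof -
  have K: "K \<in> dyadic" using assms by blast
  show ?thesis unfolding weight_def dyadic_len[OF sigma_dyadic[OF assms(1)]] dyadic_len[OF K]
    using dyadic_measure_pos[OF K] by (simp add: divide_ennreal)
qed

lemma square_sum_S_op_reindex:
  assumes tau: "\<tau> ` dyadic \<subseteq> dyadic" "inj_on \<tau> dyadic" and G: "G \<subseteq> dyadic"
  shows "(\<Sum>J\<in>G. ennreal ((S_op \<tau> a J)\<^sup>2) * len J)
       = (\<Sum>K\<in>\<tau> ` G. ennreal ((a K)\<^sup>2) * len K * ennreal (weight \<tau> K))"
proof -
  have inj: "inj_on \<tau> G" using G by (intro inj_on_subset[OF tau(2)])
  have term_eq: "ennreal ((S_op \<tau> a J)\<^sup>2) * len J = ennreal ((a (\<tau> J))\<^sup>2) * len (\<tau> J) * ennreal (weight \<tau> (\<tau> J))"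
    if J: "J \<in> G" for J
  proof -
    have Jd: "J \<in> dyadic" and tJ: "\<tau> J \<in> dyadic" using J G tau(1) by auto
    have "len (\<tau> J) * ennreal (weight \<tau> (\<tau> J)) = len J"
      unfolding weight_def sigma_tau[OF tau(2) Jd] dyadic_len[OF Jd] dyadic_len[OF tJ]
      using dyadic_measure_pos[OF tJ] dyadic_measure_pos[OF Jd]
      by (simp add: ennreal_mult[symmetric])
    thus ?thesis unfolding S_op_eq[OF tau(2) Jd] by (simp add: mult.assoc)
  qed
  show ?thesis unfolding sum.reindex[OF inj] o_def by (rule sum.cong[OF refl term_eq])
qed

section \<open>Upper bound: the norm of S_sigma is at most the middle quantity\<close>

lemma fmax_weight_le_mu:
  assumes "finite F" "F \<subseteq> H" "H \<subseteq> \<tau> ` dyadic" "\<tau> ` dyadic \<subseteq> dyadic"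
  shows "ennreal (fmax F (weight \<tau>) t) \<le> mu \<tau> H t * indicator {0..<1} t"
  using fmax_attained[OF assms(1), of "weight \<tau>" t]
proof
  assume "\<exists>K\<in>F. fmax F (weight \<tau>) t = weight \<tau> K * indicator K t"
  then obtain K where K: "K \<in> F" "fmax F (weight \<tau>) t = weight \<tau> K * indicator K t" by blast
  show ?thesis
  proof (cases "t \<in> K")
    case True
    have KH: "K \<in> H" and K_tau: "K \<in> \<tau> ` dyadic" using K(1) assms(2,3) by auto
    hence "t \<in> {0..<1}" using True assms(4) dyadic_sub_unit by blast
    moreover have "ennreal (fmax F (weight \<tau>) t) = len (sigma_of \<tau> K) / len K * indicator K t"
      using K(2) True weight_ennreal[OF K_tau assms(4)] by simp
    moreover have "\<dots> \<le> mu \<tau> H t" unfolding mu_def using KH by (rule SUP_upper)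
    ultimately show ?thesis by simp
  qed (use K(2) in simp)
qed simp

lemma middle_upper:
  assumes "H \<subseteq> \<tau> ` dyadic" "H \<noteq> {}"
  shows "(\<integral>\<^sup>+ t. mu \<tau> H t * indicator {0..<1} t \<partial>lborel) / len (\<Union> (sigma_of \<tau> ` H)) \<le> middle \<tau>"
  unfolding middle_def using assms by (intro SUP_upper) auto

text \<open>Key estimate: with H = tau{J \<subseteq> I} (so that sigma(H)^* = I), the local square sum of
  S_sigma a on I is bounded via reindexing, packing and the layer-cake embedding.\<close>
lemma square_sum_S_op_bound:
  assumes tau: "\<tau> ` dyadic \<subseteq> dyadic" "inj_on \<tau> dyadic" and I: "I \<in> dyadic"
    and G: "finite G" "G \<subseteq> {J \<in> dyadic. J \<subseteq> I}"
  shows "(\<Sum>J\<in>G. ennreal ((S_op \<tau> a J)\<^sup>2) * len J) \<le> middle \<tau> * bmo_sq a * len I"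
proof -
  define H where "H = \<tau> ` {J \<in> dyadic. J \<subseteq> I}"
  have H: "H \<subseteq> \<tau> ` dyadic" "H \<noteq> {}" unfolding H_def using I by auto
  have "sigma_of \<tau> ` H = {J \<in> dyadic. J \<subseteq> I}"
    unfolding H_def by (rule sigma_tau_image[OF tau(2)]) blast
  hence "\<Union> (sigma_of \<tau> ` H) = I" using I by auto
  hence mu_bound: "(\<integral>\<^sup>+ t. mu \<tau> H t * indicator {0..<1} t \<partial>lborel) \<le> middle \<tau> * len I"
    using middle_upper[OF H] div_len_le_iff[OF I] by simp
  define F where "F = \<tau> ` G"
  have F: "finite F" "F \<subseteq> dyadic" "F \<subseteq> H" unfolding F_def H_def using G tau(1) by auto
  have "(\<Sum>J\<in>G. ennreal ((S_op \<tau> a J)\<^sup>2) * len J)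
      = (\<Sum>K\<in>F. ennreal ((a K)\<^sup>2) * len K * ennreal (weight \<tau> K))"
    unfolding F_def using G by (intro square_sum_S_op_reindex[OF tau]) auto
  also have "\<dots> \<le> bmo_sq a * (\<integral>\<^sup>+t. ennreal (fmax F (weight \<tau>) t) \<partial>lborel)"
  proof (rule packing_embedding[OF F(1) _ weight_nonneg])
    show "F \<subseteq> sets lborel" using F(2) dyadic_measurable by blast
    fix E assume "E \<subseteq> F"
    thus "(\<Sum>K\<in>E. ennreal ((a K)\<^sup>2) * len K) \<le> bmo_sq a * len (\<Union>E)"
      using F(1,2) by (intro bmo_packing) (auto intro: finite_subset)
  qed
  also have "\<dots> \<le> bmo_sq a * (\<integral>\<^sup>+ t. mu \<tau> H t * indicator {0..<1} t \<partial>lborel)"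
    using fmax_weight_le_mu[OF F(1,3) H(1) tau(1)] by (intro mult_left_mono nn_integral_mono) auto
  also have "\<dots> \<le> bmo_sq a * (middle \<tau> * len I)" using mu_bound by (rule mult_left_mono) simp
  finally show ?thesis by (simp add: algebra_simps)
qed

lemma S_norm_le_middle:
  assumes tau: "\<tau> ` dyadic \<subseteq> dyadic" "inj_on \<tau> dyadic"
  shows "S_norm_sq \<tau> \<le> middle \<tau>"
  unfolding S_norm_sq_def
proof (rule Inf_lower, intro CollectI allI impI)
  fix a :: "real set \<Rightarrow> real"
  show "bmo_sq (S_op \<tau> a) \<le> middle \<tau> * bmo_sq a"
    unfolding bmo_sq_def[of "S_op \<tau> a"]
  proof (rule SUP_least)
    fix I assume I: "I \<in> dyadic"
    have "local_l2_sq (S_op \<tau> a) I \<le> middle \<tau> * bmo_sq a * len I"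
      unfolding local_l2_sq_def nn_integral_count_space_SUP_finite[OF countable_dyadic_below]
      using square_sum_S_op_bound[OF tau I] by (intro SUP_least) auto
    thus "local_l2_sq (S_op \<tau> a) I / len I \<le> middle \<tau> * bmo_sq a"
      using div_len_le_iff[OF I] by blast
  qed
qed

section \<open>Lower bound: the middle quantity is at most the norm of S_sigma\<close>

text \<open>The test coefficients for a finite family F: a(K)^2 |K| is the measure of the region of K.\<close>
definition test_coeff :: "real set set \<Rightarrow> (real set \<Rightarrow> real) \<Rightarrow> real set \<Rightarrow> real" where
  "test_coeff F w K =
     (if K \<in> F then sqrt (measure lborel (max_region F w K) / measure lborel K) else 0)"

lemma test_coeff_square:
  assumes F: "finite F" "F \<subseteq> dyadic" and K: "K \<in> F"
  shows "ennreal ((test_coeff F w K)\<^sup>2) * len K = len (max_region F w K)"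
proof -
  have Kd: "K \<in> dyadic" using K F(2) by blast
  have region_sets: "max_region F w K \<in> sets lborel"
    using F Kd dyadic_measurable by (intro max_region_measurable) auto
  have "len (max_region F w K) \<le> len K" using max_region_subset Kd dyadic_measurable by (intro emeasure_mono)
  hence "len (max_region F w K) \<noteq> top" using dyadic_len_finite[OF Kd] by (metis leD)
  hence "len (max_region F w K) = ennreal (measure lborel (max_region F w K))"
    by (rule emeasure_eq_ennreal_measure)
  thus ?thesis unfolding test_coeff_def dyadic_len[OF Kd] using K dyadic_measure_pos[OF Kd]
    by (simp add: ennreal_mult[symmetric])
qed

text \<open>The test coefficients have BMO norm at most 1, as the regions are disjoint.\<close>
lemma test_coeff_bmo:
  assumes F: "finite F" "F \<subseteq> dyadic"
  shows "bmo_sq (test_coeff F w) \<le> 1"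
  unfolding bmo_sq_def
proof (rule SUP_least)
  fix L assume L: "L \<in> dyadic"
  define P where "P = {J \<in> F. J \<subseteq> L}"
  have P: "finite P" "P \<subseteq> F" unfolding P_def using F(1) by auto
  have F_sets: "F \<subseteq> sets lborel" using F(2) dyadic_measurable by blast
  have "local_l2_sq (test_coeff F w) L = (\<Sum>J\<in>P. ennreal ((test_coeff F w J)\<^sup>2) * len J)"
    unfolding local_l2_sq_def
    by (rule nn_integral_count_space') (use P F(2) in \<open>auto simp: P_def test_coeff_def\<close>)
  also have "\<dots> = (\<Sum>J\<in>P. len (max_region F w J))"
    using P F by (intro sum.cong refl test_coeff_square) auto
  also have "\<dots> = len (\<Union>J\<in>P. max_region F w J)"
  proof (rule sum_emeasure[OF _ _ P(1)])
    show "max_region F w ` P \<subseteq> sets lborel"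
      using P(2) F_sets by (blast intro: max_region_measurable[OF F(1) F_sets])
    show "disjoint_family_on (max_region F w) P"
      using P(2) max_region_disjoint unfolding disjoint_family_on_def by blast
  qed
  also have "\<dots> \<le> len L"
  proof (rule emeasure_mono[OF _ dyadic_measurable[OF L]])
    show "(\<Union>J\<in>P. max_region F w J) \<subseteq> L" using max_region_subset unfolding P_def by blast
  qed
  finally show "local_l2_sq (test_coeff F w) L / len L \<le> 1"
    using div_len_le_iff[OF L] by simp
qed

text \<open>Testing the operator bound on the test coefficients: the integral of the maximal
  function of a finite F \<subseteq> tau(D) is at most C |sigma(F)^*|.\<close>
lemma integral_fmax_le_S_bound:
  assumes tau: "\<tau> ` dyadic \<subseteq> dyadic" "inj_on \<tau> dyadic"
    and C: "\<And>a. bmo_sq a < top \<Longrightarrow> bmo_sq (S_op \<tau> a) \<le> C * bmo_sq a"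
    and F: "finite F" "F \<subseteq> \<tau> ` dyadic"
  shows "(\<integral>\<^sup>+t. ennreal (fmax F (weight \<tau>) t) \<partial>lborel) \<le> C * len (\<Union> (sigma_of \<tau> ` F))"
proof -
  define a where "a = test_coeff F (weight \<tau>)"
  have FD: "F \<subseteq> dyadic" using F tau by blast
  have sigma_F: "sigma_of \<tau> ` F \<subseteq> dyadic" using F(2) sigma_dyadic by blast
  have "(\<lambda>K. \<tau> (sigma_of \<tau> K)) ` F = (\<lambda>K. K) ` F"
    using F(2) tau_sigma by (intro image_cong) auto
  hence tau_sigma_F: "\<tau> ` sigma_of \<tau> ` F = F" by (simp add: image_image)
  have "bmo_sq a \<le> 1" unfolding a_def using F(1) FD by (rule test_coeff_bmo)
  hence "bmo_sq (S_op \<tau> a) \<le> C * bmo_sq a" by (intro C) (simp add: le_less_trans)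
  also have "\<dots> \<le> C" using \<open>bmo_sq a \<le> 1\<close> mult_left_mono[of _ 1 C] by simp
  finally have S_a: "bmo_sq (S_op \<tau> a) \<le> C" .
  have "(\<integral>\<^sup>+t. ennreal (fmax F (weight \<tau>) t) \<partial>lborel)
      = (\<Sum>K\<in>F. ennreal (weight \<tau> K) * len (max_region F (weight \<tau>) K))"
    using F(1) FD weight_nonneg by (rule integral_fmax_regions)
  also have "\<dots> = (\<Sum>K\<in>F. ennreal ((a K)\<^sup>2) * len K * ennreal (weight \<tau> K))"
    unfolding a_def using test_coeff_square[OF F(1) FD] by (intro sum.cong refl) (simp add: mult.commute)
  also have "\<dots> = (\<Sum>J\<in>sigma_of \<tau> ` F. ennreal ((S_op \<tau> a J)\<^sup>2) * len J)"
    using square_sum_S_op_reindex[OF tau sigma_F] unfolding tau_sigma_F by simp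
  also have "\<dots> \<le> bmo_sq (S_op \<tau> a) * len (\<Union> (sigma_of \<tau> ` F))"
    using F(1) sigma_F by (intro bmo_packing) auto
  also have "\<dots> \<le> C * len (\<Union> (sigma_of \<tau> ` F))" using S_a by (rule mult_right_mono) simp
  finally show ?thesis .
qed

text \<open>Monotone convergence: a bound for the maximal functions of all finite subfamilies
  of a (countable) H bounds the integral of mu_H.\<close>
lemma integral_mu_le:
  assumes tau: "\<tau> ` dyadic \<subseteq> dyadic" and H: "H \<subseteq> \<tau> ` dyadic" "H \<noteq> {}"
    and bound: "\<And>F. finite F \<Longrightarrow> F \<subseteq> H \<Longrightarrow> (\<integral>\<^sup>+t. ennreal (fmax F (weight \<tau>) t) \<partial>lborel) \<le> X"
  shows "(\<integral>\<^sup>+ t. mu \<tau> H t * indicator {0..<1} t \<partial>lborel) \<le> X"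
proof -
  have countable_H: "countable H" using H(1) countable_dyadic by (metis countable_image countable_subset)
  define g where "g n = from_nat_into H ` {..n}" for n
  have g: "finite (g n)" "g n \<subseteq> H" for n unfolding g_def using from_nat_into[OF H(2)] by auto
  have g_sets: "g n \<subseteq> sets lborel" for n using g H(1) tau dyadic_measurable by blast
  have mu_le: "mu \<tau> H t * indicator {0..<1} t \<le> (SUP n. ennreal (fmax (g n) (weight \<tau>) t))" for t
  proof -
    have "len (sigma_of \<tau> K) / len K * indicator K t \<le> (SUP n. ennreal (fmax (g n) (weight \<tau>) t))"
      if K: "K \<in> H" for K
    proof -
      obtain n where "K = from_nat_into H n"
        using range_from_nat_into[OF H(2) countable_H] K by (metis rangeE)
      hence Kg: "K \<in> g n" unfolding g_def by blast
      have "K \<in> \<tau> ` dyadic" using K H(1) by blast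
      hence "len (sigma_of \<tau> K) / len K * indicator K t = ennreal (weight \<tau> K * indicator K t)"
        using weight_ennreal[OF _ tau] by (simp add: indicator_def)
      also have "\<dots> \<le> ennreal (fmax (g n) (weight \<tau>) t)" by (intro ennreal_leI fmax_ge[OF g(1) Kg])
      also have "\<dots> \<le> (SUP n. ennreal (fmax (g n) (weight \<tau>) t))" by (rule SUP_upper) simp
      finally show ?thesis .
    qed
    hence "mu \<tau> H t \<le> (SUP n. ennreal (fmax (g n) (weight \<tau>) t))"
      unfolding mu_def by (rule SUP_least)
    thus ?thesis by (simp add: indicator_def)
  qed
  have "incseq (\<lambda>n t. ennreal (fmax (g n) (weight \<tau>) t))"
    using g(1) by (intro incseq_SucI) (auto simp: le_fun_def g_def intro!: ennreal_leI fmax_mono)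
  hence "(\<integral>\<^sup>+ t. (SUP n. ennreal (fmax (g n) (weight \<tau>) t)) \<partial>lborel)
      = (SUP n. \<integral>\<^sup>+ t. ennreal (fmax (g n) (weight \<tau>) t) \<partial>lborel)"
    using fmax_measurable[OF g(1) g_sets] by (intro nn_integral_monotone_convergence_SUP) auto
  also have "\<dots> \<le> X" using bound g by (intro SUP_least) auto
  finally show ?thesis using mu_le order_trans nn_integral_mono by (metis (no_types, lifting))
qed

lemma middle_le_S_norm:
  assumes tau: "\<tau> ` dyadic \<subseteq> dyadic" "inj_on \<tau> dyadic"
  shows "middle \<tau> \<le> S_norm_sq \<tau>"
  unfolding middle_def
proof (rule SUP_least)
  fix H assume "H \<in> {H. H \<subseteq> \<tau> ` dyadic \<and> H \<noteq> {}}"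
  hence H: "H \<subseteq> \<tau> ` dyadic" "H \<noteq> {}" by auto
  define U where "U = \<Union> (sigma_of \<tau> ` H)"
  have sigma_H: "sigma_of \<tau> ` H \<subseteq> dyadic" using sigma_dyadic H(1) by blast
  have U_sets: "U \<in> sets lborel" unfolding U_def using sigma_H dyadic_measurable
    by (intro sets.countable_Union countable_subset[OF sigma_H countable_dyadic]) auto
  have "len U \<le> len {0..<(1::real)}" unfolding U_def using sigma_H dyadic_sub_unit
    by (intro emeasure_mono) auto
  hence U_finite: "len U < top" by (simp add: le_less_trans)
  obtain K0 where K0: "K0 \<in> H" using H(2) by blast
  have "len (sigma_of \<tau> K0) \<le> len U" unfolding U_def using K0 U_sets U_def by (intro emeasure_mono) auto
  hence U_ne_0: "len U \<noteq> 0" using dyadic_len_ne_0 K0 sigma_H by (metis image_subset_iff le_zero_eq)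
  show "(\<integral>\<^sup>+ t. mu \<tau> H t * indicator {0..<1} t \<partial>lborel) / len (\<Union> (sigma_of \<tau> ` H)) \<le> S_norm_sq \<tau>"
    unfolding S_norm_sq_def U_def[symmetric]
  proof (rule Inf_greatest)
    fix C assume "C \<in> {C. \<forall>a. bmo_sq a < top \<longrightarrow> bmo_sq (S_op \<tau> a) \<le> C * bmo_sq a}"
    hence C: "\<And>a. bmo_sq a < top \<Longrightarrow> bmo_sq (S_op \<tau> a) \<le> C * bmo_sq a" by auto
    have "(\<integral>\<^sup>+ t. mu \<tau> H t * indicator {0..<1} t \<partial>lborel) \<le> C * len U"
    proof (rule integral_mu_le[OF tau(1) H])
      fix F assume F: "finite F" "F \<subseteq> H"
      have "(\<integral>\<^sup>+t. ennreal (fmax F (weight \<tau>) t) \<partial>lborel) \<le> C * len (\<Union> (sigma_of \<tau> ` F))"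
        using F H(1) by (intro integral_fmax_le_S_bound[OF tau C]) auto
      also have "\<dots> \<le> C * len U"
        using F(2) U_sets unfolding U_def by (intro mult_left_mono emeasure_mono) auto
      finally show "(\<integral>\<^sup>+t. ennreal (fmax F (weight \<tau>) t) \<partial>lborel) \<le> C * len U" .
    qed
    thus "(\<integral>\<^sup>+ t. mu \<tau> H t * indicator {0..<1} t \<partial>lborel) / len U \<le> C"
      using div_le_iff_ennreal[OF U_ne_0 U_finite] by blast
  qed
qed

theorem proposition1:
  shows "\<exists>A::real. A > 0 \<and>
    (\<forall>\<tau>. \<tau> ` dyadic \<subseteq> dyadic \<and> inj_on \<tau> dyadic \<longrightarrow>
       S_norm_sq \<tau> / ennreal A \<le> middle \<tau> \<and> middle \<tau> \<le> S_norm_sq \<tau>)"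
proof (intro exI[of _ 1] conjI allI impI)
  fix \<tau> :: "real set \<Rightarrow> real set"
  assume "\<tau> ` dyadic \<subseteq> dyadic \<and> inj_on \<tau> dyadic"
  hence S_eq_middle: "S_norm_sq \<tau> = middle \<tau>"
    using S_norm_le_middle middle_le_S_norm by (blast intro: antisym)
  show "S_norm_sq \<tau> / ennreal 1 \<le> middle \<tau>"
    using S_eq_middle mult_divide_eq_ennreal[of 1 "S_norm_sq \<tau>"] by simp
  show "middle \<tau> \<le> S_norm_sq \<tau>" using S_eq_middle by simp
qed simp

end
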